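(* In any quiver, if $A$ is an ancestor of finite height of a normal vertex $B$, then both $A$ and $B$ are phylogenetic.
   Context: A quiver consists of a class of vertices and, for each ordered pair of vertices $(A,B)$, a set of edges $A\to B$ (loops and multiple edges allowed). An evolution of length $m\ge 0$ is a sequence $A_0\leftarrow A_1\leftarrow\cdots\leftarrow A_m$ of vertices together with edges $A_k\to A_{k-1}$ ($1\le k\le m$); $A_0$ is its initial and $A_m$ its terminal vertex. Write $A\le B$ ($A$ is an ancestor of $B$) if there is an evolution with initial vertex $A$ and terminal vertex $B$; $A,B$ are isotypic ($A\sim B$) if $A\le B$ and $B\le A$. A vertex $A$ is primitive if every ancestor of $A$ is isotypic to $A$. A full evolution for $X$ is an evolution with primitive initial vertex and terminal vertex $X$. The height $h(X)$ is the smallest length of a full evolution for $X$ ($\infty$ if none). A vertex $A_k$ ($0\le k<m$) of an evolution $A_0\leftarrow\cdots\leftarrow A_m$ is critical if $h(A_k)<\infty$ and $h(A_{k+1})=h(A_k)+1$. The critical ancestors of a vertex $B$ are the critical vertices of full evolutions terminating at $B$. $B$ is normal if any two critical ancestors of $B$ of equal height are isotypic. An evolution $\alpha=(A_0\leftarrow\cdots\leftarrow A_m)$ embeds in $\beta=(B_0\leftarrow\cdots\leftarrow B_n)$ if $m\le n$ and there are $0\le r_0<\cdots<r_m\le n$ with $A_k\sim B_{r_k}$. A universal evolution for $X$ is a full evolution for $X$ embedding in every full evolution for $X$; $X$ is phylogenetic if one exists. *)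

theory Defs
  imports Main "HOL-Library.Extended_Nat"
begin

text \<open>An evolution A_0 <- A_1 <- ... <- A_m is a pair (as, es) of a vertex list
  as = [A_0,...,A_m] and an edge list es = [e_1,...,e_m], where the edge es!k
  (the paper's e_(k+1)) goes from A_(k+1) to A_k.\<close>

type_synonym ('v,'e) evol = "'v list \<times> 'e list"

definition evolution :: "('e \<Rightarrow> 'v) \<Rightarrow> ('e \<Rightarrow> 'v) \<Rightarrow> ('v,'e) evol \<Rightarrow> bool" where
  "evolution src tgt ev \<longleftrightarrow>
     length (fst ev) = Suc (length (snd ev)) \<and>
     (\<forall>k < length (snd ev). src (snd ev ! k) = fst ev ! Suc k \<and> tgt (snd ev ! k) = fst ev ! k)"

definition evlen :: "('v,'e) evol \<Rightarrow> nat" where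
  "evlen ev = length (snd ev)"

definition initial :: "('v,'e) evol \<Rightarrow> 'v" where
  "initial ev = hd (fst ev)"

definition terminal :: "('v,'e) evol \<Rightarrow> 'v" where
  "terminal ev = last (fst ev)"

definition ancestor :: "('e \<Rightarrow> 'v) \<Rightarrow> ('e \<Rightarrow> 'v) \<Rightarrow> 'v \<Rightarrow> 'v \<Rightarrow> bool" where
  "ancestor src tgt A B \<longleftrightarrow>
     (\<exists>ev. evolution src tgt ev \<and> initial ev = A \<and> terminal ev = B)"

definition isotypic :: "('e \<Rightarrow> 'v) \<Rightarrow> ('e \<Rightarrow> 'v) \<Rightarrow> 'v \<Rightarrow> 'v \<Rightarrow> bool" where
  "isotypic src tgt A B \<longleftrightarrow> ancestor src tgt A B \<and> ancestor src tgt B A"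

definition primitive :: "('e \<Rightarrow> 'v) \<Rightarrow> ('e \<Rightarrow> 'v) \<Rightarrow> 'v \<Rightarrow> bool" where
  "primitive src tgt A \<longleftrightarrow> (\<forall>C. ancestor src tgt C A \<longrightarrow> isotypic src tgt C A)"

definition full_evolution :: "('e \<Rightarrow> 'v) \<Rightarrow> ('e \<Rightarrow> 'v) \<Rightarrow> 'v \<Rightarrow> ('v,'e) evol \<Rightarrow> bool" where
  "full_evolution src tgt X ev \<longleftrightarrow>
     evolution src tgt ev \<and> primitive src tgt (initial ev) \<and> terminal ev = X"

definition height :: "('e \<Rightarrow> 'v) \<Rightarrow> ('e \<Rightarrow> 'v) \<Rightarrow> 'v \<Rightarrow> enat" where
  "height src tgt X =
     (if \<exists>ev. full_evolution src tgt X ev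
      then enat (LEAST n. \<exists>ev. full_evolution src tgt X ev \<and> evlen ev = n)
      else \<infinity>)"

definition critical_at :: "('e \<Rightarrow> 'v) \<Rightarrow> ('e \<Rightarrow> 'v) \<Rightarrow> ('v,'e) evol \<Rightarrow> nat \<Rightarrow> bool" where
  "critical_at src tgt ev k \<longleftrightarrow>
     k < evlen ev \<and> height src tgt (fst ev ! k) < \<infinity> \<and>
     height src tgt (fst ev ! Suc k) = height src tgt (fst ev ! k) + 1"

definition critical_ancestors :: "('e \<Rightarrow> 'v) \<Rightarrow> ('e \<Rightarrow> 'v) \<Rightarrow> 'v \<Rightarrow> 'v set" where
  "critical_ancestors src tgt B =
     {fst ev ! k | ev k. full_evolution src tgt B ev \<and> critical_at src tgt ev k}"

definition normal :: "('e \<Rightarrow> 'v) \<Rightarrow> ('e \<Rightarrow> 'v) \<Rightarrow> 'v \<Rightarrow> bool" where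
  "normal src tgt B \<longleftrightarrow>
     (\<forall>C \<in> critical_ancestors src tgt B. \<forall>D \<in> critical_ancestors src tgt B.
        height src tgt C = height src tgt D \<longrightarrow> isotypic src tgt C D)"

definition embeds :: "('e \<Rightarrow> 'v) \<Rightarrow> ('e \<Rightarrow> 'v) \<Rightarrow> ('v,'e) evol \<Rightarrow> ('v,'e) evol \<Rightarrow> bool" where
  "embeds src tgt \<alpha> \<beta> \<longleftrightarrow>
     evlen \<alpha> \<le> evlen \<beta> \<and>
     (\<exists>r :: nat \<Rightarrow> nat. strict_mono_on {0..evlen \<alpha>} r \<and> r (evlen \<alpha>) \<le> evlen \<beta> \<and>
        (\<forall>k \<le> evlen \<alpha>. isotypic src tgt (fst \<alpha> ! k) (fst \<beta> ! r k)))"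

definition universal_evolution :: "('e \<Rightarrow> 'v) \<Rightarrow> ('e \<Rightarrow> 'v) \<Rightarrow> 'v \<Rightarrow> ('v,'e) evol \<Rightarrow> bool" where
  "universal_evolution src tgt X ev \<longleftrightarrow>
     full_evolution src tgt X ev \<and>
     (\<forall>ev'. full_evolution src tgt X ev' \<longrightarrow> embeds src tgt ev ev')"

definition phylogenetic :: "('e \<Rightarrow> 'v) \<Rightarrow> ('e \<Rightarrow> 'v) \<Rightarrow> 'v \<Rightarrow> bool" where
  "phylogenetic src tgt X \<longleftrightarrow> (\<exists>ev. universal_evolution src tgt X ev)"

end

theory Submission imports Defs begin

text \<open>A shortest full evolution x = (X_0 \<leftarrow> \<dots> \<leftarrow> X_n) of a vertex X of height n has
  h(X_k) = k, so every X_k with k < n is a critical ancestor of X. Along any other full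
  evolution y of X the height starts at 0, ends at n and rises by at most one per step;
  hence for every k < n there is a last position r_k where it equals k and the next
  vertex has height k + 1. That vertex y_(r_k) is a critical ancestor of X of height k,
  so by normality it is isotypic to X_k, and k \<mapsto> r_k embeds x in y. Normality passes
  to ancestors since critical ancestors of A are critical ancestors of every B \<ge> A,
  and finite height passes to descendants.\<close>

lemma evolution_vertices_nonempty: "evolution src tgt ev \<Longrightarrow> fst ev \<noteq> []"
  by (auto simp: evolution_def)

lemma initial_conv_nth: "evolution src tgt ev \<Longrightarrow> initial ev = fst ev ! 0"
  by (simp add: initial_def hd_conv_nth evolution_vertices_nonempty)

lemma terminal_conv_nth: "evolution src tgt ev \<Longrightarrow> terminal ev = fst ev ! evlen ev"
  by (simp add: terminal_def last_conv_nth evolution_vertices_nonempty)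
     (simp add: evolution_def evlen_def)

definition evol_prefix :: "nat \<Rightarrow> ('v,'e) evol \<Rightarrow> ('v,'e) evol" where
  "evol_prefix k ev = (take (Suc k) (fst ev), take k (snd ev))"

lemma evolution_evol_prefix:
  assumes "evolution src tgt ev" "k \<le> evlen ev"
  shows "evolution src tgt (evol_prefix k ev)" "evlen (evol_prefix k ev) = k"
    and "i \<le> k \<Longrightarrow> fst (evol_prefix k ev) ! i = fst ev ! i"
  using assms by (auto simp: evolution_def evol_prefix_def evlen_def)

lemma full_evolution_evol_prefix:
  assumes "full_evolution src tgt X ev" "k \<le> evlen ev"
  shows "full_evolution src tgt (fst ev ! k) (evol_prefix k ev)"
proof -
  have ev: "evolution src tgt ev" using assms(1) by (simp add: full_evolution_def)
  note pre = evolution_evol_prefix[OF ev assms(2)]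
  have "initial (evol_prefix k ev) = initial ev"
    using pre by (simp add: initial_conv_nth[OF pre(1)] initial_conv_nth[OF ev])
  moreover have "terminal (evol_prefix k ev) = fst ev ! k"
    using pre by (simp add: terminal_conv_nth[OF pre(1)])
  ultimately show ?thesis
    using assms(1) pre(1) by (simp add: full_evolution_def)
qed

text \<open>The shared vertex terminal e1 = initial e2 is kept only once.\<close>
definition evol_append :: "('v,'e) evol \<Rightarrow> ('v,'e) evol \<Rightarrow> ('v,'e) evol" where
  "evol_append e1 e2 = (fst e1 @ tl (fst e2), snd e1 @ snd e2)"

lemma evlen_evol_append [simp]: "evlen (evol_append e1 e2) = evlen e1 + evlen e2"
  by (simp add: evlen_def evol_append_def)

lemma nth_evol_append:
  assumes e1: "evolution src tgt e1" and e2: "evolution src tgt e2"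
    and match: "terminal e1 = initial e2" and i: "i \<le> evlen e1 + evlen e2"
  shows "fst (evol_append e1 e2) ! i =
           (if i \<le> evlen e1 then fst e1 ! i else fst e2 ! (i - evlen e1))"
proof (cases "i \<le> evlen e1")
  case True
  then show ?thesis using e1 by (simp add: evol_append_def nth_append evolution_def evlen_def)
next
  case False
  have "i - Suc (evlen e1) < length (tl (fst e2))"
    using False i e2 by (simp add: evolution_def evlen_def)
  then have "tl (fst e2) ! (i - Suc (evlen e1)) = fst e2 ! (i - evlen e1)"
    using False by (simp add: nth_tl Suc_diff_Suc)
  then show ?thesis
    using False e1 by (simp add: evol_append_def nth_append evolution_def evlen_def)
qed

lemma nth_evol_append_right:
  assumes e1: "evolution src tgt e1" and e2: "evolution src tgt e2"
    and match: "terminal e1 = initial e2" and "evlen e1 \<le> i" "i \<le> evlen e1 + evlen e2"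
  shows "fst (evol_append e1 e2) ! i = fst e2 ! (i - evlen e1)"
  using nth_evol_append[OF e1 e2 match] assms(4,5) match
    initial_conv_nth[OF e2] terminal_conv_nth[OF e1]
  by (cases "i = evlen e1") auto

lemma evolution_evol_append:
  assumes e1: "evolution src tgt e1" and e2: "evolution src tgt e2"
    and match: "terminal e1 = initial e2"
  shows "evolution src tgt (evol_append e1 e2)"
proof -
  have "src (snd (evol_append e1 e2) ! k) = fst (evol_append e1 e2) ! Suc k \<and>
        tgt (snd (evol_append e1 e2) ! k) = fst (evol_append e1 e2) ! k"
    if k: "k < evlen e1 + evlen e2" for k
  proof (cases "k < evlen e1")
    case True
    then show ?thesis
      using e1 k nth_evol_append[OF e1 e2 match, of k] nth_evol_append[OF e1 e2 match, of "Suc k"]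
      by (simp add: evol_append_def nth_append evolution_def evlen_def)
  next
    case False
    then show ?thesis
      using e2 k nth_evol_append_right[OF e1 e2 match, of k]
        nth_evol_append_right[OF e1 e2 match, of "Suc k"]
      by (simp add: evol_append_def nth_append evolution_def evlen_def Suc_diff_le)
  qed
  then show ?thesis
    using e1 e2 by (simp add: evolution_def evol_append_def evlen_def)
qed

lemma evol_append_ends:
  assumes e1: "evolution src tgt e1" and e2: "evolution src tgt e2"
    and match: "terminal e1 = initial e2"
  shows "initial (evol_append e1 e2) = initial e1"
    and "terminal (evol_append e1 e2) = terminal e2"
  using nth_evol_append[OF e1 e2 match, of 0]
    nth_evol_append_right[OF e1 e2 match, of "evlen e1 + evlen e2"]
    initial_conv_nth[OF evolution_evol_append[OF assms]] initial_conv_nth[OF e1]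
    terminal_conv_nth[OF evolution_evol_append[OF assms]] terminal_conv_nth[OF e2]
  by simp_all

lemma full_evolution_evol_append:
  assumes "full_evolution src tgt A f" "evolution src tgt e" "initial e = A"
  shows "full_evolution src tgt (terminal e) (evol_append f e)"
  using assms evolution_evol_append[of src tgt f e] evol_append_ends[of src tgt f e]
  by (simp add: full_evolution_def)

lemma ancestor_full_evolution:
  assumes "ancestor src tgt A B" "full_evolution src tgt A f"
  obtains g where "full_evolution src tgt B g" "evlen f \<le> evlen g"
    "\<And>i. i \<le> evlen f \<Longrightarrow> fst g ! i = fst f ! i"
proof -
  obtain e where e: "evolution src tgt e" "initial e = A" "terminal e = B"
    using assms(1) unfolding ancestor_def by blast
  have f: "evolution src tgt f" "terminal f = A"
    using assms(2) by (auto simp: full_evolution_def)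
  show thesis
    using that[of "evol_append f e"] full_evolution_evol_append[OF assms(2) e(1,2)] e f
      nth_evol_append[OF f(1) e(1)]
    by simp
qed

lemma isotypic_refl: "isotypic src tgt X X"
  unfolding isotypic_def ancestor_def
  by (auto intro!: exI[of _ "([X], [])"] simp: evolution_def initial_def terminal_def
      simp del: split_paired_Ex)

lemma height_le_evlen:
  assumes "full_evolution src tgt X ev"
  shows "height src tgt X \<le> enat (evlen ev)"
proof -
  have "(LEAST n. \<exists>ev. full_evolution src tgt X ev \<and> evlen ev = n) \<le> evlen ev"
    by (rule Least_le) (use assms in blast)
  moreover have "\<exists>ev. full_evolution src tgt X ev" using assms by blast
  ultimately show ?thesis unfolding height_def by (simp del: split_paired_Ex)
qed

lemma full_evolution_of_height:
  assumes "height src tgt X = enat n"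
  obtains ev where "full_evolution src tgt X ev" "evlen ev = n"
proof -
  have ex: "\<exists>ev. full_evolution src tgt X ev"
    using assms unfolding height_def by (auto split: if_splits)
  then have "\<exists>ev. full_evolution src tgt X ev \<and>
               evlen ev = (LEAST n. \<exists>ev. full_evolution src tgt X ev \<and> evlen ev = n)"
    by (intro LeastI_ex[of "\<lambda>n. \<exists>ev. full_evolution src tgt X ev \<and> evlen ev = n"]) blast
  moreover have "n = (LEAST n. \<exists>ev. full_evolution src tgt X ev \<and> evlen ev = n)"
    using assms ex unfolding height_def by simp
  ultimately show thesis using that by blast
qed

lemma height_finite_if_full_evolution:
  "full_evolution src tgt X ev \<Longrightarrow> \<exists>n. height src tgt X = enat n \<and> n \<le> evlen ev"
  using height_le_evlen by (metis enat_ile enat_ord_simps(1))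

lemma height_nth_full_evolution:
  assumes "full_evolution src tgt X ev" "i \<le> evlen ev"
  shows "\<exists>a. height src tgt (fst ev ! i) = enat a \<and> a \<le> i"
  using height_finite_if_full_evolution[OF full_evolution_evol_prefix[OF assms]]
    evolution_evol_prefix[OF _ assms(2)] assms(1)
  by (auto simp: full_evolution_def)

lemma height_primitive: "primitive src tgt X \<Longrightarrow> height src tgt X = 0"
  using height_le_evlen[of src tgt X "([X], [])"]
  by (simp add: full_evolution_def initial_def terminal_def evolution_def evlen_def
      flip: zero_enat_def)

lemma height_Suc_le:
  assumes ev: "evolution src tgt ev" and k: "k < evlen ev"
    and h: "height src tgt (fst ev ! k) = enat j"
  shows "height src tgt (fst ev ! Suc k) \<le> enat (Suc j)"
proof -
  obtain f where f: "full_evolution src tgt (fst ev ! k) f" "evlen f = j"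
    using full_evolution_of_height[OF h] by blast
  define step where "step = ([fst ev ! k, fst ev ! Suc k], [snd ev ! k])"
  have "evolution src tgt step"
    using ev k by (auto simp: step_def evolution_def evlen_def less_Suc_eq)
  moreover have "initial step = fst ev ! k" "terminal step = fst ev ! Suc k" "evlen step = 1"
    by (simp_all add: step_def initial_def terminal_def evlen_def)
  ultimately show ?thesis
    using height_le_evlen[OF full_evolution_evol_append[OF f(1), of step]] f(2) by simp
qed

lemma height_along_evolution:
  assumes ev: "evolution src tgt ev" and h: "height src tgt (fst ev ! i) = enat a"
    and "i \<le> j" "j \<le> evlen ev"
  shows "\<exists>b. height src tgt (fst ev ! j) = enat b \<and> b \<le> a + (j - i)"
  using assms(3,4)
proof (induction j)
  case 0
  then show ?case using h by simp
next
  case (Suc j)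
  show ?case
  proof (cases "i = Suc j")
    case True
    then show ?thesis using h by simp
  next
    case False
    then obtain b where b: "height src tgt (fst ev ! j) = enat b" "b \<le> a + (j - i)"
      using Suc by auto
    have "height src tgt (fst ev ! Suc j) \<le> enat (Suc b)"
      using height_Suc_le[OF ev _ b(1)] Suc.prems by simp
    then obtain c where "height src tgt (fst ev ! Suc j) = enat c" "c \<le> Suc b"
      by (metis enat_ile enat_ord_simps(1))
    then show ?thesis using b(2) False Suc.prems by (intro exI[of _ c]) auto
  qed
qed

lemma height_finite_if_ancestor:
  assumes "ancestor src tgt A B" "height src tgt A < \<infinity>"
  shows "\<exists>b. height src tgt B = enat b"
proof -
  obtain a where "height src tgt A = enat a" using assms(2) by (cases "height src tgt A") auto
  then obtain f where "full_evolution src tgt A f" by (rule full_evolution_of_height)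
  then obtain g where "full_evolution src tgt B g" by (rule ancestor_full_evolution[OF assms(1)])
  then show ?thesis using height_finite_if_full_evolution by metis
qed

lemma critical_ancestors_mono:
  assumes "ancestor src tgt A B"
  shows "critical_ancestors src tgt A \<subseteq> critical_ancestors src tgt B"
proof
  fix C assume "C \<in> critical_ancestors src tgt A"
  then obtain f k where f: "C = fst f ! k" "full_evolution src tgt A f" "critical_at src tgt f k"
    unfolding critical_ancestors_def by blast
  obtain g where g: "full_evolution src tgt B g" "evlen f \<le> evlen g"
    "\<And>i. i \<le> evlen f \<Longrightarrow> fst g ! i = fst f ! i"
    using ancestor_full_evolution[OF assms f(2)] by blast
  have "k < evlen f" using f(3) by (simp add: critical_at_def)
  then have "critical_at src tgt g k" "C = fst g ! k"
    using f(1,3) g(2,3) by (simp_all add: critical_at_def)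
  then show "C \<in> critical_ancestors src tgt B"
    using g(1) unfolding critical_ancestors_def by blast
qed

lemma normal_if_ancestor_normal:
  "ancestor src tgt A B \<Longrightarrow> normal src tgt B \<Longrightarrow> normal src tgt A"
  using critical_ancestors_mono unfolding normal_def by (meson subsetD)

text \<open>For a height profile h that starts at 0, ends at n and rises by at most one per
  step, r j is the last position where h does not exceed j.\<close>
lemma last_crossings:
  fixes h :: "nat \<Rightarrow> nat"
  assumes h0: "h 0 = 0" and hm: "h m = n" and step: "\<And>i. i < m \<Longrightarrow> h (Suc i) \<le> Suc (h i)"
  obtains r where "strict_mono_on {0..n} r" "r n = m"
    "\<And>j. j < n \<Longrightarrow> r j < m \<and> h (r j) = j \<and> h (Suc (r j)) = Suc j"
proof -
  define P where "P j i \<longleftrightarrow> i \<le> m \<and> h i \<le> j" for j i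
  define r where "r j = (if j = n then m else Greatest (P j))" for j
  have bounded: "P j i \<Longrightarrow> i \<le> m" for j i by (simp add: P_def)
  have r_P: "P j (r j)" if "j < n" for j
    using GreatestI_nat[of "P j" 0 m] bounded that h0 by (auto simp: r_def P_def)
  have r_greatest: "i \<le> r j" if "j < n" "P j i" for i j
    using Greatest_le_nat[of "P j" i m] bounded that by (auto simp: r_def)
  have r_less: "r j < m" if "j < n" for j
    using r_P[OF that] hm that by (auto simp: P_def le_less)
  have r_crossing: "r j < m \<and> h (r j) = j \<and> h (Suc (r j)) = Suc j" if j: "j < n" for j
  proof -
    have "\<not> P j (Suc (r j))" using r_greatest[OF j, of "Suc (r j)"] by auto
    then have "j < h (Suc (r j))" using r_less[OF j] by (simp add: P_def)
    moreover have "h (Suc (r j)) \<le> Suc (h (r j))" using step r_less[OF j] by blast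
    moreover have "h (r j) \<le> j" using r_P[OF j] by (simp add: P_def)
    ultimately show ?thesis using r_less[OF j] by linarith
  qed
  have "strict_mono_on {0..n} r"
  proof (rule strict_mono_onI)
    fix j j' assume jj': "j \<in> {0..n}" "j' \<in> {0..n}" "j < j'"
    show "r j < r j'"
    proof (cases "j' = n")
      case True
      then show ?thesis using r_less jj' by (simp add: r_def)
    next
      case False
      then have "P j' (Suc (r j))" using r_crossing[of j] jj' by (simp add: P_def)
      then show ?thesis using r_greatest[of j' "Suc (r j)"] False jj' by simp
    qed
  qed
  then show thesis using that r_crossing by (simp add: r_def)
qed

lemma height_nth_shortest_full_evolution:
  assumes x: "full_evolution src tgt X x" "evlen x = n" and hX: "height src tgt X = enat n"
    and k: "k \<le> n"
  shows "height src tgt (fst x ! k) = enat k"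
proof -
  have xe: "evolution src tgt x" using x by (simp add: full_evolution_def)
  obtain a where a: "height src tgt (fst x ! k) = enat a" "a \<le> k"
    using height_nth_full_evolution[OF x(1)] k x(2) by blast
  obtain b where "height src tgt (fst x ! n) = enat b" "b \<le> a + (n - k)"
    using height_along_evolution[OF xe a(1) k] x(2) by auto
  moreover have "fst x ! n = X"
    using x terminal_conv_nth[OF xe] by (simp add: full_evolution_def)
  ultimately have "a = k" using hX a(2) k by simp
  then show ?thesis using a by simp
qed

lemma critical_ancestor_nth_shortest_full_evolution:
  assumes x: "full_evolution src tgt X x" "evlen x = n" and hX: "height src tgt X = enat n"
    and j: "j < n"
  shows "fst x ! j \<in> critical_ancestors src tgt X"
proof -
  have "critical_at src tgt x j"
    using j x height_nth_shortest_full_evolution[OF x hX, of j]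
      height_nth_shortest_full_evolution[OF x hX, of "Suc j"]
    by (simp add: critical_at_def one_enat_def)
  then show ?thesis using x(1) unfolding critical_ancestors_def by blast
qed

lemma shortest_full_evolution_embeds:
  assumes nX: "normal src tgt X" and hX: "height src tgt X = enat n"
    and x: "full_evolution src tgt X x" "evlen x = n"
    and y: "full_evolution src tgt X y"
  shows "embeds src tgt x y"
proof -
  have ye: "evolution src tgt y" using y by (simp add: full_evolution_def)
  define m where "m = evlen y"
  define h where "h i = the_enat (height src tgt (fst y ! i))" for i
  have h: "height src tgt (fst y ! i) = enat (h i)" if "i \<le> m" for i
    using height_nth_full_evolution[OF y, of i] that by (auto simp: m_def h_def)
  have "h 0 = 0"
    using height_primitive[of src tgt "fst y ! 0"] y initial_conv_nth[OF ye]
    by (simp add: full_evolution_def h_def zero_enat_def)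
  moreover have "h m = n"
    using h[of m] y terminal_conv_nth[OF ye] hX by (simp add: full_evolution_def m_def)
  moreover have "h (Suc i) \<le> Suc (h i)" if "i < m" for i
    using height_Suc_le[OF ye, of i "h i"] h[of i] h[of "Suc i"] that by (simp add: m_def)
  ultimately obtain r where r: "strict_mono_on {0..n} r" "r n = m"
    "\<And>j. j < n \<Longrightarrow> r j < m \<and> h (r j) = j \<and> h (Suc (r j)) = Suc j"
    using last_crossings[of h m n] by blast
  have "isotypic src tgt (fst x ! k) (fst y ! r k)" if k: "k \<le> n" for k
  proof (cases "k = n")
    case True
    have "fst x ! k = X" "fst y ! r k = X"
      using True r(2) x y terminal_conv_nth[OF ye] terminal_conv_nth[of src tgt x]
      by (simp_all add: full_evolution_def m_def)
    then show ?thesis by (simp add: isotypic_refl)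
  next
    case False
    then have k: "k < n" using k by simp
    have "critical_at src tgt y (r k)"
      using r(3)[OF k] h[of "r k"] h[of "Suc (r k)"]
      by (simp add: critical_at_def m_def one_enat_def)
    then have "fst y ! r k \<in> critical_ancestors src tgt X"
      using y unfolding critical_ancestors_def by blast
    moreover have "height src tgt (fst y ! r k) = height src tgt (fst x ! k)"
      using r(3)[OF k] h[of "r k"] height_nth_shortest_full_evolution[OF x hX, of k] k by simp
    ultimately show ?thesis
      using nX critical_ancestor_nth_shortest_full_evolution[OF x hX k]
      unfolding normal_def by metis
  qed
  moreover have "n \<le> m" using height_le_evlen[OF y] hX by (simp add: m_def)
  ultimately show ?thesis using x(2) r(1,2) by (auto simp: embeds_def m_def)
qed

lemma phylogenetic_if_normal:
  assumes "normal src tgt X" "height src tgt X = enat n"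
  shows "phylogenetic src tgt X"
proof -
  obtain x where "full_evolution src tgt X x" "evlen x = n"
    using full_evolution_of_height[OF assms(2)] by blast
  then have "universal_evolution src tgt X x"
    using shortest_full_evolution_embeds[OF assms] by (simp add: universal_evolution_def)
  then show ?thesis unfolding phylogenetic_def by blast
qed

theorem corollary5p2:
  fixes src tgt :: "'e \<Rightarrow> 'v" and A B :: 'v
  assumes "ancestor src tgt A B"
    and "height src tgt A < \<infinity>"
    and "normal src tgt B"
  shows "phylogenetic src tgt A \<and> phylogenetic src tgt B"
proof -
  obtain a where a: "height src tgt A = enat a" using assms(2) by (cases "height src tgt A") auto
  obtain b where b: "height src tgt B = enat b"
    using height_finite_if_ancestor[OF assms(1,2)] by blast
  have "normal src tgt A" using normal_if_ancestor_normal[OF assms(1,3)] .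
  then show ?thesis
    using phylogenetic_if_normal[OF _ a] phylogenetic_if_normal[OF assms(3) b] by blast
qed

end
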